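(* Let $\alpha\in(0,\infty)$ and let $X_1,X_2,\ldots$ be i.i.d. random variables with $\Pr(X_i=0)=\Pr(X_i=\alpha)=1/2$. Let $\mu_\alpha$ be the distribution of the random continued fraction $[1,X_1,1,X_2,1,X_3,\ldots]$. If $\mu_\alpha$ is absolutely continuous with respect to Lebesgue measure with a density belonging to $L^p$ for every $p<\infty$, then $\alpha\le(3\sqrt2-4)/2$. In particular, this conclusion holds if $\mu_\alpha$ has a density in $L^\infty$.
   Context: The continued fraction $[1,x_1,1,x_2,\ldots]=\cfrac{1}{1+\cfrac{1}{x_1+\cfrac{1}{1+\cfrac{1}{x_2+\cdots}}}}$ is defined as $\lim_{n\to\infty}T_{x_1}\circ\cdots\circ T_{x_n}(0)$ with $T_a(x):=\frac{x+a}{1+x+a}$; the limit exists by monotonicity in each $x_i$. The measure $\mu_\alpha$ is supported on a bounded interval $[0,M_\alpha]$. *)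

theory Defs
  imports "HOL-Probability.Probability"
begin

definition cfT :: "real \<Rightarrow> real \<Rightarrow> real" where
  "cfT a x = (x + a) / (1 + x + a)"

text \<open>The continued fraction [1, x_1, 1, x_2, ...] with x_(i+1) = xs i, defined as
  the limit of T_(x_1) o ... o T_(x_n) (0) as n tends to infinity.\<close>
definition rcf :: "(nat \<Rightarrow> real) \<Rightarrow> real" where
  "rcf xs = lim (\<lambda>n. foldr (\<lambda>i acc. cfT (xs i) acc) [0..<n] 0)"

definition coins :: "(nat \<Rightarrow> bool) measure" where
  "coins = PiM UNIV (\<lambda>_. measure_pmf (bernoulli_pmf (1/2)))"

text \<open>X_(i+1)(w) = alpha if coin i is heads, 0 otherwise; so P(X=0)=P(X=alpha)=1/2, i.i.d.\<close>
definition Xcoin :: "real \<Rightarrow> nat \<Rightarrow> (nat \<Rightarrow> bool) \<Rightarrow> real" where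
  "Xcoin \<alpha> i \<omega> = (if \<omega> i then \<alpha> else 0)"

definition mu :: "real \<Rightarrow> real measure" where
  "mu \<alpha> = distr coins lborel (\<lambda>\<omega>. rcf (\<lambda>i. Xcoin \<alpha> i \<omega>))"

definition has_density :: "real measure \<Rightarrow> (real \<Rightarrow> real) \<Rightarrow> bool" where
  "has_density M f \<longleftrightarrow> f \<in> borel_measurable lborel \<and> (\<forall>x. 0 \<le> f x)
     \<and> M = density lborel (\<lambda>x. ennreal (f x))"

end

(* Let M be the fixed point of T_alpha in [0, oo); it is the top of the support of mu_alpha.
   If the first n coins all give alpha, the continued fraction lies in I_n = [T_alpha^n(0), M],
   so mu_alpha(I_n) >= 2^-n.  Linearising T_alpha at M gives |I_(n+1)| / |I_n| --> 1 / beta^2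
   with beta = 1 + M + alpha.  A density f in L^p gives mu(I) <= (1 + ||f||_p^p) |I|^(1 - 1/p),
   and comparing the two geometric rates forces 1/2 <= beta^(-2 (1 - 1/p)) for every p; letting
   p --> oo yields beta^2 <= 2, which is alpha <= (3 sqrt 2 - 4) / 2.  A bounded density of a
   probability measure lies in every L^p. *)

theory Submission
  imports Defs
begin

section \<open>The Moebius map and its fixed point\<close>

lemma cfT_nonneg: "0 \<le> a \<Longrightarrow> 0 \<le> x \<Longrightarrow> 0 \<le> cfT a x"
  unfolding cfT_def by simp

lemma cfT_diff:
  "0 \<le> a \<Longrightarrow> 0 \<le> x \<Longrightarrow> 0 \<le> y \<Longrightarrow>
   cfT a y - cfT a x = (y - x) / ((1 + x + a) * (1 + y + a))"
  unfolding cfT_def by (simp add: field_simps)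

lemma cfT_mono:
  assumes "0 \<le> a" "a \<le> b" "0 \<le> x" "x \<le> y"
  shows "cfT a x \<le> cfT b y"
proof -
  have "1 / (1 + y + b) \<le> 1 / (1 + x + a)"
    using assms by (intro divide_left_mono) auto
  moreover have "cfT c z = 1 - 1 / (1 + z + c)" if "0 \<le> c" "0 \<le> z" for c z
    using that unfolding cfT_def by (simp add: field_simps)
  ultimately show ?thesis
    using assms by simp
qed

definition cfT_fixpoint :: "real \<Rightarrow> real" where
  "cfT_fixpoint a = (sqrt (a\<^sup>2 + 4 * a) - a) / 2"

lemma cfT_fixpoint_pos: "0 < a \<Longrightarrow> 0 < cfT_fixpoint a"
  unfolding cfT_fixpoint_def by (simp add: real_less_rsqrt)

lemma cfT_fixpoint_nonneg: "0 \<le> a \<Longrightarrow> 0 \<le> cfT_fixpoint a"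
  unfolding cfT_fixpoint_def by (simp add: real_le_rsqrt)

lemma cfT_cfT_fixpoint:
  assumes "0 \<le> a"
  shows "cfT a (cfT_fixpoint a) = cfT_fixpoint a"
proof -
  define M where "M = cfT_fixpoint a"
  have "2 * M + a = sqrt (a\<^sup>2 + 4 * a)"
    unfolding M_def cfT_fixpoint_def by (simp add: field_simps)
  then have "(2 * M + a)\<^sup>2 = a\<^sup>2 + 4 * a"
    using assms by simp
  then have "M * (1 + M + a) = M + a"
    by (simp add: power2_eq_square algebra_simps)
  moreover have "0 \<le> M"
    using assms unfolding M_def by (rule cfT_fixpoint_nonneg)
  ultimately show ?thesis
    using assms unfolding M_def[symmetric] cfT_def by (simp add: field_simps)
qed

lemma funpow_cfT_fixpoint: "0 \<le> a \<Longrightarrow> (cfT a ^^ n) (cfT_fixpoint a) = cfT_fixpoint a"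
  by (induction n) (simp_all add: cfT_cfT_fixpoint)

lemma cfT_fixpoint_threshold:
  assumes "0 \<le> a" and "(1 + cfT_fixpoint a + a)\<^sup>2 \<le> 2"
  shows "a \<le> (3 * sqrt 2 - 4) / 2"
proof -
  define s where "s = sqrt 2"
  define S where "S = sqrt (a\<^sup>2 + 4 * a)"
  have s: "s * s = 2" "0 < s"
    unfolding s_def by simp_all
  have "1 + cfT_fixpoint a + a \<le> s"
    using assms unfolding s_def by (intro real_le_rsqrt) simp
  then have "S \<le> 2 * s - 2 - a"
    unfolding cfT_fixpoint_def S_def[symmetric] by (simp add: field_simps)
  moreover have "0 \<le> S"
    unfolding S_def using assms by simp
  ultimately have "S * S \<le> (2 * s - 2 - a) * (2 * s - 2 - a)"
    by (intro mult_mono) auto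
  moreover have "S * S = a\<^sup>2 + 4 * a"
    unfolding S_def using assms by simp
  ultimately have "a\<^sup>2 + 4 * a \<le> (2 * s - 2 - a) * (2 * s - 2 - a)"
    by simp
  then have "s * (2 * a) \<le> s * (3 * s - 4)"
    using s by (simp add: power2_eq_square algebra_simps)
  then show ?thesis
    using s unfolding s_def by simp
qed

section \<open>Partial continued fractions and the orbit of 0\<close>

definition cf_partial :: "(nat \<Rightarrow> real) \<Rightarrow> nat \<Rightarrow> real \<Rightarrow> real" where
  "cf_partial xs n y = foldr (\<lambda>i acc. cfT (xs i) acc) [0..<n] y"

lemma cf_partial_0 [simp]: "cf_partial xs 0 y = y"
  by (simp add: cf_partial_def)

lemma cf_partial_Suc: "cf_partial xs (Suc n) y = cf_partial xs n (cfT (xs n) y)"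
  by (simp add: cf_partial_def)

lemma cf_partial_const: "cf_partial (\<lambda>_. a) n y = (cfT a ^^ n) y"
  by (induction n arbitrary: y) (simp_all add: cf_partial_Suc funpow_swap1)

lemma cf_partial_cong: "(\<And>i. i < n \<Longrightarrow> xs i = ys i) \<Longrightarrow> cf_partial xs n y = cf_partial ys n y"
  unfolding cf_partial_def by (intro foldr_cong) auto

lemma cf_partial_mono:
  assumes "\<And>i. 0 \<le> xs i" "\<And>i. xs i \<le> ys i" "0 \<le> y" "y \<le> z"
  shows "cf_partial xs n y \<le> cf_partial ys n z"
  using assms(3,4)
proof (induction n arbitrary: y z)
  case (Suc n)
  have "0 \<le> cfT (xs n) y" "cfT (xs n) y \<le> cfT (ys n) z"
    using Suc.prems assms(1,2) by (auto intro: cfT_nonneg cfT_mono)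
  then show ?case
    using Suc.IH by (simp add: cf_partial_Suc)
qed simp

context
  fixes xs :: "nat \<Rightarrow> real" and a :: real
  assumes nonneg: "\<And>i. 0 \<le> xs i" and le_a: "\<And>i. xs i \<le> a"
begin

lemma cf_partial_incseq: "incseq (\<lambda>n. cf_partial xs n 0)"
proof (rule incseq_SucI)
  fix n
  have "cf_partial xs n 0 \<le> cf_partial xs n (cfT (xs n) 0)"
    using nonneg by (intro cf_partial_mono cfT_nonneg) auto
  then show "cf_partial xs n 0 \<le> cf_partial xs (Suc n) 0"
    by (simp add: cf_partial_Suc)
qed

lemma cf_partial_le_cfT_fixpoint: "cf_partial xs n 0 \<le> cfT_fixpoint a"
proof -
  have a: "0 \<le> a"
    using nonneg[of 0] le_a[of 0] by linarith
  then have "cf_partial xs n 0 \<le> cf_partial (\<lambda>_. a) n (cfT_fixpoint a)"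
    using nonneg le_a by (intro cf_partial_mono cfT_fixpoint_nonneg) auto
  then show ?thesis
    using a by (simp add: cf_partial_const funpow_cfT_fixpoint)
qed

lemma cf_partial_LIMSEQ_rcf: "(\<lambda>n. cf_partial xs n 0) \<longlonglongrightarrow> rcf xs"
proof -
  obtain L where L: "(\<lambda>n. cf_partial xs n 0) \<longlonglongrightarrow> L"
    using incseq_convergent[OF cf_partial_incseq] cf_partial_le_cfT_fixpoint by blast
  moreover from L have "rcf xs = L"
    unfolding rcf_def cf_partial_def[symmetric] by (rule limI)
  ultimately show ?thesis
    by simp
qed

lemma cf_partial_le_rcf: "cf_partial xs n 0 \<le> rcf xs"
  using cf_partial_incseq cf_partial_LIMSEQ_rcf by (rule incseq_le)

lemma rcf_le_cfT_fixpoint: "rcf xs \<le> cfT_fixpoint a"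
  using cf_partial_LIMSEQ_rcf by (rule LIMSEQ_le_const2) (use cf_partial_le_cfT_fixpoint in blast)

end

definition cf_orbit :: "real \<Rightarrow> nat \<Rightarrow> real" where
  "cf_orbit a n = (cfT a ^^ n) 0"

definition cf_gap :: "real \<Rightarrow> nat \<Rightarrow> real" where
  "cf_gap a n = cfT_fixpoint a - cf_orbit a n"

lemma cf_orbit_Suc: "cf_orbit a (Suc n) = cfT a (cf_orbit a n)"
  by (simp add: cf_orbit_def)

lemma cf_orbit_nonneg: "0 \<le> a \<Longrightarrow> 0 \<le> cf_orbit a n"
  by (induction n) (simp_all add: cf_orbit_def cfT_nonneg)

lemma cf_gap_Suc:
  assumes "0 \<le> a"
  shows "cf_gap a (Suc n) = cf_gap a n / ((1 + cf_orbit a n + a) * (1 + cfT_fixpoint a + a))"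
proof -
  have "cf_gap a (Suc n) = cfT a (cfT_fixpoint a) - cfT a (cf_orbit a n)"
    using assms by (simp add: cf_gap_def cf_orbit_Suc cfT_cfT_fixpoint)
  also have "\<dots> = cf_gap a n / ((1 + cf_orbit a n + a) * (1 + cfT_fixpoint a + a))"
    unfolding cf_gap_def using assms by (intro cfT_diff cf_orbit_nonneg cfT_fixpoint_nonneg)
  finally show ?thesis .
qed

lemma cf_gap_pos: "0 < a \<Longrightarrow> 0 < cf_gap a n"
proof (induction n)
  case 0
  then show ?case
    by (simp add: cf_gap_def cf_orbit_def cfT_fixpoint_pos)
next
  case (Suc n)
  have "0 < (1 + cf_orbit a n + a) * (1 + cfT_fixpoint a + a)"
    using Suc.prems cf_orbit_nonneg[of a n] cfT_fixpoint_pos[of a] by (intro mult_pos_pos) auto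
  then show ?case
    using Suc by (simp add: cf_gap_Suc)
qed

lemma cf_gap_LIMSEQ_0:
  assumes "0 < a"
  shows "cf_gap a \<longlonglongrightarrow> 0"
proof -
  define \<beta> where "\<beta> = 1 + cfT_fixpoint a + a"
  have \<beta>: "1 < \<beta>"
    using assms cfT_fixpoint_pos[OF assms] unfolding \<beta>_def by simp
  have contract: "cf_gap a (Suc n) \<le> cf_gap a n / \<beta>" for n
  proof -
    have "\<beta> \<le> (1 + cf_orbit a n + a) * \<beta>"
      using assms \<beta> cf_orbit_nonneg[of a n] by simp
    then show ?thesis
      using \<beta> cf_gap_pos[OF assms, of n] unfolding cf_gap_Suc[OF less_imp_le[OF assms]] \<beta>_def[symmetric]
      by (intro divide_left_mono) auto
  qed
  have bound: "cf_gap a n \<le> cf_gap a 0 * (1 / \<beta>) ^ n" for n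
  proof (induction n)
    case (Suc n)
    have "cf_gap a (Suc n) \<le> cf_gap a n * (1 / \<beta>)"
      using contract[of n] by simp
    also have "\<dots> \<le> cf_gap a 0 * (1 / \<beta>) ^ n * (1 / \<beta>)"
      using Suc \<beta> by (intro mult_right_mono) auto
    finally show ?case
      by (simp add: mult.assoc)
  qed simp
  have "\<forall>n. norm (cf_gap a n) \<le> cf_gap a 0 * (1 / \<beta>) ^ n"
    using bound cf_gap_pos[OF assms] by (simp add: less_imp_le)
  moreover have "(\<lambda>n. cf_gap a 0 * (1 / \<beta>) ^ n) \<longlonglongrightarrow> 0"
    using \<beta> by (intro tendsto_mult_right_zero LIMSEQ_realpow_zero) auto
  ultimately show ?thesis
    by (rule Lim_null_comparison[OF always_eventually])
qed

lemma cf_gap_ratio_LIMSEQ: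
  assumes "0 < a"
  shows "(\<lambda>n. cf_gap a (Suc n) / cf_gap a n) \<longlonglongrightarrow> 1 / (1 + cfT_fixpoint a + a)\<^sup>2"
proof -
  have "cf_orbit a \<longlonglongrightarrow> cfT_fixpoint a"
    using tendsto_diff[OF tendsto_const cf_gap_LIMSEQ_0[OF assms], of "cfT_fixpoint a"]
    by (simp add: cf_gap_def)
  then have "(\<lambda>n. 1 / ((1 + cf_orbit a n + a) * (1 + cfT_fixpoint a + a)))
      \<longlonglongrightarrow> 1 / ((1 + cfT_fixpoint a + a) * (1 + cfT_fixpoint a + a))"
    using assms cfT_fixpoint_pos[OF assms] by (intro tendsto_intros) auto
  moreover have "cf_gap a (Suc n) / cf_gap a n = 1 / ((1 + cf_orbit a n + a) * (1 + cfT_fixpoint a + a))" for n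
    using cf_gap_pos[OF assms, of n] unfolding cf_gap_Suc[OF less_imp_le[OF assms]] by simp
  ultimately show ?thesis
    by (simp add: power2_eq_square)
qed

section \<open>Mass of the intervals near the top of the support\<close>

lemma Xcoin_measurable [measurable]: "(\<lambda>\<omega>. Xcoin a i \<omega>) \<in> borel_measurable coins"
proof -
  have "(\<lambda>\<omega>. \<omega> i) \<in> measurable coins (count_space UNIV)"
    unfolding coins_def using measurable_component_singleton[of i UNIV] by simp
  then have "(\<lambda>b. if b then a else 0) \<circ> (\<lambda>\<omega>. \<omega> i) \<in> borel_measurable coins"
    by (rule measurable_comp) simp
  then show ?thesis
    unfolding Xcoin_def comp_def .
qed

lemma cfT_measurable [measurable]:
  "f \<in> borel_measurable M \<Longrightarrow> g \<in> borel_measurable M \<Longrightarrow> (\<lambda>x. cfT (f x) (g x)) \<in> borel_measurable M"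
  unfolding cfT_def by (intro borel_measurable_divide borel_measurable_add) auto

lemma cf_partial_Xcoin_measurable:
  "h \<in> borel_measurable coins \<Longrightarrow> (\<lambda>\<omega>. cf_partial (\<lambda>i. Xcoin a i \<omega>) n (h \<omega>)) \<in> borel_measurable coins"
proof (induction n arbitrary: h)
  case (Suc n)
  have "(\<lambda>\<omega>. cfT (Xcoin a n \<omega>) (h \<omega>)) \<in> borel_measurable coins"
    using Suc.prems by measurable
  then show ?case
    using Suc.IH by (simp add: cf_partial_Suc)
qed simp

lemma Xcoin_nonneg: "0 \<le> a \<Longrightarrow> 0 \<le> Xcoin a i \<omega>"
  by (simp add: Xcoin_def)

lemma Xcoin_le: "0 \<le> a \<Longrightarrow> Xcoin a i \<omega> \<le> a"
  by (simp add: Xcoin_def)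

lemma rcf_Xcoin_measurable:
  assumes "0 \<le> a"
  shows "(\<lambda>\<omega>. rcf (\<lambda>i. Xcoin a i \<omega>)) \<in> borel_measurable coins"
proof (rule borel_measurable_LIMSEQ_metric)
  show "(\<lambda>\<omega>. cf_partial (\<lambda>i. Xcoin a i \<omega>) n 0) \<in> borel_measurable coins" for n
    by (rule cf_partial_Xcoin_measurable) simp
  show "(\<lambda>n. cf_partial (\<lambda>i. Xcoin a i \<omega>) n 0) \<longlonglongrightarrow> rcf (\<lambda>i. Xcoin a i \<omega>)" for \<omega>
    using assms by (intro cf_partial_LIMSEQ_rcf[where a = a] Xcoin_nonneg Xcoin_le)
qed

interpretation coin_flips: product_prob_space "\<lambda>_. measure_pmf (bernoulli_pmf (1/2))" UNIV
  by (simp add: product_prob_space_def product_sigma_finite_def prob_space_measure_pmf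
      product_prob_space_axioms_def prob_space_imp_sigma_finite)

lemma emeasure_coins_initial_heads:
  "emeasure coins {\<omega>\<in>space coins. \<forall>i<n. \<omega> i} = ennreal ((1/2)^n)"
  using coin_flips.emeasure_PiM_Collect[of "{..<n}" "\<lambda>_. {True}"]
  by (simp add: coins_def emeasure_pmf_single ennreal_power[symmetric] ennreal_half Ball_def)

lemma prob_space_mu: "0 \<le> a \<Longrightarrow> prob_space (mu a)"
  unfolding mu_def coins_def
  by (intro prob_space.prob_space_distr prob_space_PiM prob_space_measure_pmf)
    (simp_all add: rcf_Xcoin_measurable[unfolded coins_def])

lemma emeasure_mu_orbit_interval:
  assumes "0 \<le> a"
  shows "ennreal ((1/2)^n) \<le> emeasure (mu a) {cf_orbit a n .. cfT_fixpoint a}"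
proof -
  let ?R = "\<lambda>\<omega>. rcf (\<lambda>i. Xcoin a i \<omega>)"
  let ?I = "{cf_orbit a n .. cfT_fixpoint a}"
  let ?heads = "{\<omega>\<in>space coins. \<forall>i<n. \<omega> i}"
  have "?heads \<subseteq> ?R -` ?I \<inter> space coins"
  proof
    fix \<omega> assume \<omega>: "\<omega> \<in> ?heads"
    have "cf_partial (\<lambda>i. Xcoin a i \<omega>) n 0 = cf_partial (\<lambda>_. a) n 0"
      using \<omega> by (intro cf_partial_cong) (simp add: Xcoin_def)
    then have "cf_orbit a n \<le> ?R \<omega>"
      using cf_partial_le_rcf[of "\<lambda>i. Xcoin a i \<omega>" a n] assms
      by (simp add: cf_partial_const cf_orbit_def Xcoin_nonneg Xcoin_le)
    moreover have "?R \<omega> \<le> cfT_fixpoint a"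
      using assms by (intro rcf_le_cfT_fixpoint Xcoin_nonneg Xcoin_le)
    ultimately show "\<omega> \<in> ?R -` ?I \<inter> space coins"
      using \<omega> by simp
  qed
  then have "emeasure coins ?heads \<le> emeasure coins (?R -` ?I \<inter> space coins)"
    using assms by (intro emeasure_mono measurable_sets[OF rcf_Xcoin_measurable]) simp_all
  also have "\<dots> = emeasure (mu a) ?I"
    unfolding mu_def by (rule emeasure_distr[symmetric]) (auto intro: rcf_Xcoin_measurable assms)
  finally show ?thesis
    by (simp add: emeasure_coins_initial_heads)
qed

section \<open>Densities in Lp\<close>

lemma le_cutoff_plus_powr:
  fixes y t p :: real
  assumes "0 \<le> y" "0 < t" "1 \<le> p"
  shows "y \<le> t + t powr (1 - p) * y powr p"
proof (cases "y \<le> t")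
  case True
  then show ?thesis
    by (simp add: add_increasing2)
next
  case False
  then have "0 < y"
    using assms by simp
  have "1 \<le> (y / t) powr (p - 1)"
    using False assms by (intro ge_one_powr_ge_zero) auto
  then have "y \<le> y * (y / t) powr (p - 1)"
    using \<open>0 < y\<close> by simp
  also have "\<dots> = t powr (1 - p) * y powr p"
    using \<open>0 < y\<close> assms
    by (simp add: powr_divide powr_diff powr_minus_divide field_simps)
  finally show ?thesis
    using assms by simp
qed

lemma nn_integral_Icc_le_Lp:
  fixes f :: "real \<Rightarrow> real"
  assumes f: "f \<in> borel_measurable lborel" "\<And>x. 0 \<le> f x"
    and p: "1 \<le> p" and int: "integrable lborel (\<lambda>x. \<bar>f x\<bar> powr p)" and "l < u"
  shows "(\<integral>\<^sup>+ x. ennreal (f x) * indicator {l..u} x \<partial>lborel)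
    \<le> ennreal ((1 + (LINT x|lborel. \<bar>f x\<bar> powr p)) * (u - l) powr (1 - 1/p))"
proof -
  define L where "L = u - l"
  define A where "A = (LINT x|lborel. \<bar>f x\<bar> powr p)"
  define t where "t = L powr (- 1 / p)"
  have L: "0 < L" and t: "0 < t" and A: "0 \<le> A"
    using \<open>l < u\<close> unfolding L_def t_def A_def by auto
  have "(\<integral>\<^sup>+ x. ennreal (f x) * indicator {l..u} x \<partial>lborel)
      \<le> (\<integral>\<^sup>+ x. ennreal t * indicator {l..u} x + ennreal (t powr (1 - p)) * ennreal (\<bar>f x\<bar> powr p) \<partial>lborel)"
  proof (rule nn_integral_mono)
    fix x
    have "ennreal (f x) \<le> ennreal t + ennreal (t powr (1 - p)) * ennreal (\<bar>f x\<bar> powr p)"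
      using le_cutoff_plus_powr[OF f(2) t p, of x] f(2)[of x] t
      by (simp add: ennreal_plus[symmetric] ennreal_mult[symmetric] ennreal_leI del: ennreal_plus)
    then show "ennreal (f x) * indicator {l..u} x
        \<le> ennreal t * indicator {l..u} x + ennreal (t powr (1 - p)) * ennreal (\<bar>f x\<bar> powr p)"
      by (auto simp: indicator_def)
  qed
  also have "\<dots> = ennreal t * ennreal L + ennreal (t powr (1 - p)) * ennreal A"
    using f(1) \<open>l < u\<close> unfolding L_def A_def
    by (simp add: nn_integral_add nn_integral_cmult nn_integral_eq_integral[OF int])
  also have "\<dots> = ennreal (t * L + t powr (1 - p) * A)"
    using t L A by (simp add: ennreal_mult ennreal_plus)
  also have "t * L + t powr (1 - p) * A = (1 + A) * L powr (1 - 1/p)"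
  proof -
    have "t * L = L powr (1 - 1/p)"
      unfolding t_def using L powr_add[of L "-1/p" 1] by simp
    moreover have "-1 / p * (1 - p) = 1 - 1/p"
      using p by (simp add: field_simps)
    then have "t powr (1 - p) = L powr (1 - 1/p)"
      unfolding t_def powr_powr by simp
    ultimately show ?thesis
      by (simp add: algebra_simps)
  qed
  finally show ?thesis
    unfolding L_def A_def .
qed

lemma integrable_powr_of_bounded_density:
  fixes f :: "real \<Rightarrow> real"
  assumes f: "has_density M f" and "finite_measure M"
    and bounded: "AE x in lborel. \<bar>f x\<bar> \<le> C" and p: "1 \<le> p"
  shows "integrable lborel (\<lambda>x. \<bar>f x\<bar> powr p)"
proof (rule Bochner_Integration.integrable_bound[where f = "\<lambda>x. C powr (p - 1) * f x"])
  have meas: "f \<in> borel_measurable lborel" and nonneg: "\<And>x. 0 \<le> f x"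
    and M: "M = density lborel f"
    using f unfolding has_density_def by auto
  have "(\<integral>\<^sup>+ x. ennreal (f x) \<partial>lborel) = emeasure M (space M)"
    using meas unfolding M by (simp add: emeasure_density)
  also have "\<dots> < \<infinity>"
    using finite_measure.emeasure_finite[OF \<open>finite_measure M\<close>] by (simp add: less_top)
  finally have "integrable lborel f"
    using meas nonneg by (intro integrableI_nonneg) auto
  then show "integrable lborel (\<lambda>x. C powr (p - 1) * f x)"
    by simp
  show "(\<lambda>x. \<bar>f x\<bar> powr p) \<in> borel_measurable lborel"
    using meas by measurable
  show "AE x in lborel. norm (\<bar>f x\<bar> powr p) \<le> norm (C powr (p - 1) * f x)"
    using bounded
  proof eventually_elim
    case (elim x)
    show ?case
    proof (cases "f x = 0")
      case False
      then have "f x powr p = f x powr (p - 1) * f x"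
        using nonneg[of x] by (simp add: powr_diff)
      also have "\<dots> \<le> C powr (p - 1) * f x"
        using elim nonneg[of x] p by (intro mult_right_mono powr_mono2) auto
      finally show ?thesis
        using nonneg[of x] by simp
    qed simp
  qed
qed

lemma mu_orbit_interval_Lp_bound:
  assumes a: "0 < a" and f: "has_density (mu a) f" and p: "1 \<le> p"
    and int: "integrable lborel (\<lambda>x. \<bar>f x\<bar> powr p)"
  shows "(1/2)^n \<le> (1 + (LINT x|lborel. \<bar>f x\<bar> powr p)) * cf_gap a n powr (1 - 1/p)"
proof -
  have meas: "f \<in> borel_measurable lborel" and nonneg: "\<And>x. 0 \<le> f x"
    and mu: "mu a = density lborel f"
    using f unfolding has_density_def by auto
  have "ennreal ((1/2)^n) \<le> emeasure (mu a) {cf_orbit a n .. cfT_fixpoint a}"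
    using a by (intro emeasure_mu_orbit_interval) simp
  also have "\<dots> = (\<integral>\<^sup>+ x. ennreal (f x) * indicator {cf_orbit a n .. cfT_fixpoint a} x \<partial>lborel)"
    unfolding mu using meas by (intro emeasure_density) auto
  also have "\<dots> \<le> ennreal ((1 + (LINT x|lborel. \<bar>f x\<bar> powr p)) * cf_gap a n powr (1 - 1/p))"
    using nn_integral_Icc_le_Lp[OF meas nonneg p int] cf_gap_pos[OF a, of n] by (simp add: cf_gap_def)
  finally show ?thesis
    by (subst (asm) ennreal_le_iff) (auto intro: integral_nonneg_AE)
qed

section \<open>Comparing the decay rates\<close>

lemma geometric_lower_bound_le_ratio_limit:
  fixes u :: "nat \<Rightarrow> real"
  assumes pos: "\<And>n. 0 < u n" and ratio: "(\<lambda>n. u (Suc n) / u n) \<longlonglongrightarrow> r"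
    and c: "0 < c" and bound: "\<And>n. c ^ n \<le> B * u n"
  shows "c \<le> r"
proof (rule ccontr)
  assume "\<not> c \<le> r"
  define v where "v n = u n / c ^ n" for n
  have "r / c < 1"
    using \<open>\<not> c \<le> r\<close> c by simp
  then obtain d where d: "r / c < d" "d < 1"
    using dense by blast
  have v_pos: "0 < v n" for n
    using pos c unfolding v_def by simp
  have ratio_v: "(\<lambda>n. v (Suc n) / v n) \<longlonglongrightarrow> r / c"
  proof -
    have "v (Suc n) / v n = u (Suc n) / u n / c" for n
      using pos[of n] c unfolding v_def by (simp add: field_simps)
    then show ?thesis
      using tendsto_divide[OF ratio tendsto_const, of c] c by simp
  qed
  obtain N where "\<And>n. n \<ge> N \<Longrightarrow> v (Suc n) / v n < d"
    using order_tendstoD(2)[OF ratio_v d(1)] unfolding eventually_sequentially by blast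
  then have "norm (v (Suc n)) \<le> d * norm (v n)" if "n \<ge> N" for n
    using that v_pos[of n] v_pos[of "Suc n"] by (simp add: divide_less_eq less_imp_le)
  then have "v \<longlonglongrightarrow> 0"
    using d(2) by (intro summable_LIMSEQ_zero summable_ratio_test)
  moreover have "0 < B"
  proof -
    have "1 \<le> B * u 0"
      using bound[of 0] by simp
    then show ?thesis
      using pos[of 0] zero_less_mult_iff[of B "u 0"] by linarith
  qed
  moreover have "1 / B \<le> v n" for n
    using bound[of n] c \<open>0 < B\<close> unfolding v_def by (simp add: field_simps)
  ultimately show False
    using LIMSEQ_le_const[of v 0 "1 / B"] by simp
qed

lemma mu_Lp_density_parameter_bound:
  assumes a: "0 < a" and f: "has_density (mu a) f"
    and int: "\<And>p. 1 \<le> p \<Longrightarrow> integrable lborel (\<lambda>x. \<bar>f x\<bar> powr p)"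
  shows "a \<le> (3 * sqrt 2 - 4) / 2"
proof -
  define r where "r = 1 / (1 + cfT_fixpoint a + a)\<^sup>2"
  have r: "0 < r"
    using a cfT_fixpoint_pos[OF a] unfolding r_def by simp
  have "1/2 \<le> r powr (1 - 1/p)" if p: "1 \<le> p" for p
  proof (rule geometric_lower_bound_le_ratio_limit)
    show "0 < cf_gap a n powr (1 - 1/p)" for n
      using cf_gap_pos[OF a, of n] by simp
    have "(\<lambda>n. (cf_gap a (Suc n) / cf_gap a n) powr (1 - 1/p)) \<longlonglongrightarrow> r powr (1 - 1/p)"
      using r unfolding r_def by (intro tendsto_powr cf_gap_ratio_LIMSEQ[OF a] tendsto_const) simp
    then show "(\<lambda>n. cf_gap a (Suc n) powr (1 - 1/p) / cf_gap a n powr (1 - 1/p))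
        \<longlonglongrightarrow> r powr (1 - 1/p)"
      using cf_gap_pos[OF a] by (simp add: powr_divide less_imp_le)
    show "(1/2)^n \<le> (1 + (LINT x|lborel. \<bar>f x\<bar> powr p)) * cf_gap a n powr (1 - 1/p)" for n
      using a f p int[OF p] by (rule mu_orbit_interval_Lp_bound)
  qed simp
  moreover have "((\<lambda>p. r powr (1 - 1/p)) \<longlongrightarrow> r powr (1 - 0)) at_top"
    using r by (intro tendsto_powr tendsto_diff tendsto_const tendsto_divide_0[OF tendsto_const]
        filterlim_at_top_imp_at_infinity filterlim_ident) simp
  ultimately have "1/2 \<le> r"
    using r by (intro tendsto_lowerbound[of "\<lambda>p. r powr (1 - 1/p)" _ at_top])
      (auto simp: eventually_ge_at_top intro: eventually_mono[OF eventually_ge_at_top[of 1]])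
  then have "(1 + cfT_fixpoint a + a)\<^sup>2 \<le> 2"
    using a cfT_fixpoint_pos[OF a] unfolding r_def by (simp add: field_simps)
  then show ?thesis
    using a by (intro cfT_fixpoint_threshold) simp_all
qed

theorem proposition3p2:
  fixes \<alpha> :: real
  assumes "0 < \<alpha>"
  shows "((\<exists>f. has_density (mu \<alpha>) f
             \<and> (\<forall>p::real. 1 \<le> p \<longrightarrow> integrable lborel (\<lambda>x. \<bar>f x\<bar> powr p)))
           \<longrightarrow> \<alpha> \<le> (3 * sqrt 2 - 4) / 2)
       \<and> ((\<exists>f C. has_density (mu \<alpha>) f \<and> (AE x in lborel. \<bar>f x\<bar> \<le> C))
           \<longrightarrow> \<alpha> \<le> (3 * sqrt 2 - 4) / 2)"
proof (intro conjI impI)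
  assume "\<exists>f. has_density (mu \<alpha>) f \<and> (\<forall>p::real. 1 \<le> p \<longrightarrow> integrable lborel (\<lambda>x. \<bar>f x\<bar> powr p))"
  then show "\<alpha> \<le> (3 * sqrt 2 - 4) / 2"
    using mu_Lp_density_parameter_bound[OF assms] by blast
next
  assume "\<exists>f C. has_density (mu \<alpha>) f \<and> (AE x in lborel. \<bar>f x\<bar> \<le> C)"
  then obtain f C where f: "has_density (mu \<alpha>) f" and bounded: "AE x in lborel. \<bar>f x\<bar> \<le> C"
    by blast
  have "finite_measure (mu \<alpha>)"
    using prob_space_mu assms by (simp add: prob_space_def less_imp_le)
  then show "\<alpha> \<le> (3 * sqrt 2 - 4) / 2"
    using f bounded assms
    by (intro mu_Lp_density_parameter_bound integrable_powr_of_bounded_density)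
qed

end
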